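(* Let $S,T$ be nonempty subsets of $\{1,\dots,n-1\}$ and let $D$ be the digraph of the Boolean Toeplitz matrix $T_n\langle S;T\rangle$. If two vertices $u$ and $v$ are adjacent in the $m$-step competition graph $C^m(D)$ for some positive integer $m$, then $u-v$ is a multiple of $\gcd\{s+t: s\in S,t\in T\}$.
   Context: $T_n\langle S;T\rangle$ is the $n\times n$ $(0,1)$-matrix whose $(i,j)$-entry is $1$ iff $j-i\in S$ or $i-j\in T$; its digraph has vertex set $[n]$ and arc $(i,j)$ iff that entry is $1$. $C^m(D)$ is the graph on $[n]$ in which distinct $u,v$ are adjacent iff there is a vertex $w$ with directed $(u,w)$-walk and directed $(v,w)$-walk both of length $m$. *)

theory Defs
  imports Main
begin

text \<open>Arc relation of the digraph of the Boolean Toeplitz matrix T_n<S;T>: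
  vertex set {1..n}; arc (i,j) iff the (i,j)-entry is 1, i.e. j - i \<in> S or i - j \<in> T.\<close>
definition toeplitz_arc :: "nat \<Rightarrow> nat set \<Rightarrow> nat set \<Rightarrow> nat \<Rightarrow> nat \<Rightarrow> bool" where
  "toeplitz_arc n S T i j \<longleftrightarrow> i \<in> {1..n} \<and> j \<in> {1..n} \<and>
     ((\<exists>s\<in>S. int j - int i = int s) \<or> (\<exists>t\<in>T. int i - int j = int t))"

definition dwalk :: "('a \<Rightarrow> 'a \<Rightarrow> bool) \<Rightarrow> 'a set \<Rightarrow> nat \<Rightarrow> 'a \<Rightarrow> 'a \<Rightarrow> bool" where
  "dwalk A V m u w \<longleftrightarrow> (\<exists>xs. length xs = Suc m \<and> set xs \<subseteq> V \<and> hd xs = u \<and> last xs = w \<and>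
       (\<forall>k<m. A (xs ! k) (xs ! Suc k)))"

definition mstep_comp_adj :: "('a \<Rightarrow> 'a \<Rightarrow> bool) \<Rightarrow> 'a set \<Rightarrow> nat \<Rightarrow> 'a \<Rightarrow> 'a \<Rightarrow> bool" where
  "mstep_comp_adj A V m u v \<longleftrightarrow> u \<in> V \<and> v \<in> V \<and> u \<noteq> v \<and>
     (\<exists>w\<in>V. dwalk A V m u w \<and> dwalk A V m v w)"

end

theory Submission
  imports Defs
begin

text \<open>Modulo g = gcd {s + t}, every arc of the Toeplitz digraph moves a vertex by an amount
  congruent to one fixed s0 \<in> S: a forward step s satisfies s - s0 = (s + t0) - (s0 + t0),
  and a backward step -t satisfies -t - s0 = -(s0 + t). Hence a walk of length m from u ends
  at a vertex congruent to u + m s0, and two walks of the same length with a common end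
  force u \<equiv> v (mod g).\<close>

lemma walk_prefix_displacement_dvd:
  fixes f :: "'a \<Rightarrow> int" and g c :: int
  assumes step: "\<And>i j. A i j \<Longrightarrow> g dvd f j - f i - c"
    and arcs: "\<forall>k<m. A (xs ! k) (xs ! Suc k)"
    and "k \<le> m"
  shows "g dvd f (xs ! k) - f (xs ! 0) - int k * c"
  using \<open>k \<le> m\<close>
proof (induction k)
  case 0
  then show ?case by simp
next
  case (Suc k)
  then have "g dvd f (xs ! Suc k) - f (xs ! k) - c"
    using arcs step by simp
  moreover have "g dvd f (xs ! k) - f (xs ! 0) - int k * c"
    using Suc by simp
  ultimately have "g dvd (f (xs ! Suc k) - f (xs ! k) - c) + (f (xs ! k) - f (xs ! 0) - int k * c)"
    by (rule dvd_add)
  then show ?case by (simp add: algebra_simps)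
qed

lemma dwalk_displacement_dvd:
  fixes f :: "'a \<Rightarrow> int" and g c :: int
  assumes step: "\<And>i j. A i j \<Longrightarrow> g dvd f j - f i - c"
    and "dwalk A V m u w"
  shows "g dvd f w - f u - int m * c"
proof -
  obtain xs where xs: "length xs = Suc m" "hd xs = u" "last xs = w"
    and arcs: "\<forall>k<m. A (xs ! k) (xs ! Suc k)"
    using \<open>dwalk A V m u w\<close> unfolding dwalk_def by blast
  have "xs \<noteq> []"
    using xs(1) by auto
  then have "xs ! 0 = u" "xs ! m = w"
    using xs by (simp_all add: hd_conv_nth last_conv_nth)
  with walk_prefix_displacement_dvd[OF step arcs order_refl] show ?thesis
    by simp
qed

lemma mstep_comp_adj_dvd:
  fixes f :: "'a \<Rightarrow> int" and g c :: int
  assumes step: "\<And>i j. A i j \<Longrightarrow> g dvd f j - f i - c"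
    and "mstep_comp_adj A V m u v"
  shows "g dvd f u - f v"
proof -
  obtain w where walks: "dwalk A V m u w" "dwalk A V m v w"
    using \<open>mstep_comp_adj A V m u v\<close> unfolding mstep_comp_adj_def by blast
  have "g dvd (f w - f v - int m * c) - (f w - f u - int m * c)"
    using dwalk_displacement_dvd[OF step walks(2)] dwalk_displacement_dvd[OF step walks(1)]
    by (rule dvd_diff)
  then show ?thesis by simp
qed

lemma toeplitz_arc_displacement_dvd:
  assumes "s\<^sub>0 \<in> S" and "t\<^sub>0 \<in> T" and "toeplitz_arc n S T i j"
  shows "int (Gcd {s + t | s t. s \<in> S \<and> t \<in> T}) dvd int j - int i - int s\<^sub>0"
proof -
  define g where "g = Gcd {s + t | s t. s \<in> S \<and> t \<in> T}"
  have sum_dvd: "int g dvd int s + int t" if "s \<in> S" "t \<in> T" for s t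
  proof -
    have "g dvd s + t"
      unfolding g_def by (rule Gcd_dvd) (use that in blast)
    then show ?thesis
      unfolding of_nat_add[symmetric] int_dvd_int_iff .
  qed
  from \<open>toeplitz_arc n S T i j\<close> consider
      (forward) s where "s \<in> S" "int j - int i = int s"
    | (backward) t where "t \<in> T" "int i - int j = int t"
    unfolding toeplitz_arc_def by blast
  then have "int g dvd int j - int i - int s\<^sub>0"
  proof cases
    case forward
    then have "int j - int i - int s\<^sub>0 = (int s + int t\<^sub>0) - (int s\<^sub>0 + int t\<^sub>0)"
      by simp
    also have "int g dvd \<dots>"
      using sum_dvd[OF forward(1) assms(2)] sum_dvd[OF assms(1,2)] by (rule dvd_diff)
    finally show ?thesis .
  next
    case backward
    then have "int j - int i - int s\<^sub>0 = - (int s\<^sub>0 + int t)"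
      by simp
    also have "int g dvd \<dots>"
      using sum_dvd[OF assms(1) backward(1)] by (simp only: dvd_minus_iff)
    finally show ?thesis .
  qed
  then show ?thesis
    unfolding g_def .
qed

theorem theorem2p3:
  fixes n m u v :: nat and S T :: "nat set"
  assumes "S \<noteq> {}" and "T \<noteq> {}"
    and "S \<subseteq> {1..n-1}" and "T \<subseteq> {1..n-1}"
    and "m \<ge> 1"
    and "mstep_comp_adj (toeplitz_arc n S T) {1..n} m u v"
  shows "int (Gcd {s + t | s t. s \<in> S \<and> t \<in> T}) dvd (int u - int v)"
proof -
  obtain s\<^sub>0 t\<^sub>0 where "s\<^sub>0 \<in> S" "t\<^sub>0 \<in> T"
    using \<open>S \<noteq> {}\<close> \<open>T \<noteq> {}\<close> by blast
  then have "\<And>i j. toeplitz_arc n S T i j \<Longrightarrow>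
      int (Gcd {s + t | s t. s \<in> S \<and> t \<in> T}) dvd int j - int i - int s\<^sub>0"
    by (rule toeplitz_arc_displacement_dvd)
  then show ?thesis
    using \<open>mstep_comp_adj (toeplitz_arc n S T) {1..n} m u v\<close> by (rule mstep_comp_adj_dvd)
qed

end
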